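(* Let $p$ be a prime, let $N,K,T,M,h$ be positive integers with $T\ge 1$ and $K\mid M$, and let $\beta_1,\ldots,\beta_{K+T}\in\mathbb{F}_p$ be pairwise distinct and $\alpha_1,\ldots,\alpha_N\in\mathbb{F}_p$ be pairwise distinct with $\{\alpha_1,\ldots,\alpha_N\}\cap\{\beta_1,\ldots,\beta_{K+T}\}=\emptyset$. For $k\in[K+T]$ let $L_k(x)=\prod_{\ell\in[K+T]\setminus\{k\}}\frac{x-\beta_\ell}{\beta_k-\beta_\ell}$. For each client $n\in[N]$ let $D_n,d_n$ be positive integers and let $\overline{X}_n=(\overline{X}_n^i)_{i\in[D_n]}$ with $\overline{X}_n^i\in\mathbb{F}_p^{M\times d_n}$ and $\overline{W}_n=(\overline{W}_n^i)_{i\in[D_n]}$ with $\overline{W}_n^i\in\mathbb{F}_p^{d_n\times h}$ be random variables (private data and model of client $n$); for $k\in[K]$ let $\overline{X}_{n,k}^i$ be the $k$-th block of $M/K$ consecutive rows of $\overline{X}_n^i$. Let all mask matrices $Z_{n,k}^i\in\mathbb{F}_p^{(M/K)\times d_n}$ and $V_{n,k}^i\in\mathbb{F}_p^{d_n\times h}$ ($n\in[N]$, $i\in[D_n]$, $k=K+1,\ldots,K+T$) be uniformly distributed, mutually independent, and independent of all data and models. Define $$F_n^i(x)=\sum_{k=1}^K\overline{X}_{n,k}^iL_k(x)+\sum_{k=K+1}^{K+T}Z_{n,k}^iL_k(x),\qquad G_n^i(x)=\sum_{k=1}^K\overline{W}_{n}^iL_k(x)+\sum_{k=K+1}^{K+T}V_{n,k}^iL_k(x).$$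 Fix a batch $\mathcal{B}\subseteq[M/K]$ of row indices, write $A^{(\mathcal{B})}$ for the rows of $A$ indexed by $\mathcal{B}$, and for each $n'\in[N]$ let $$\widetilde{H}_{n'}^{(\mathcal{B})}=\sum_{m=1}^N\sum_{i=1}^{D_m}F_m^{i}(\alpha_{n'})^{(\mathcal{B})}\,G_m^i(\alpha_{n'})$$ be the result uploaded by client $n'$ to the server. Then for every $n\in[N]$, $I\big(\widetilde{H}_n^{(\mathcal{B})};(\overline{X}_n,\overline{W}_n)\big)=0$, where $I$ denotes mutual information.
   Context: This is the privacy guarantee of the FedVS protocol for split vertical federated learning against a curious server: clients secret-share their quantized data and quantized polynomial-network models via Lagrange coded computing (partition parameter $K$, privacy parameter $T$) and each client uploads only its homomorphically computed coded embedding. $[N]=\{1,\ldots,N\}$. *)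

theory Defs
  imports "HOL-Probability.Probability" "Jordan_Normal_Form.Matrix"
begin

text \<open>Conventions: indices of clients, blocks, data items are 1-based as in the paper;
  matrix entries (Jordan_Normal_Form) are 0-based. The field F_p is a finite field type
  of prime cardinality.\<close>

definition lagrange_basis :: "(nat \<Rightarrow> 'a::field) \<Rightarrow> nat \<Rightarrow> nat \<Rightarrow> 'a \<Rightarrow> 'a" where
  "lagrange_basis \<beta> KT k x = (\<Prod>l\<in>{1..KT} - {k}. (x - \<beta> l) / (\<beta> k - \<beta> l))"

definition row_block :: "nat \<Rightarrow> nat \<Rightarrow> 'a mat \<Rightarrow> 'a mat" where
  "row_block r k A = mat r (dim_col A) (\<lambda>(a, b). A $$ ((k - 1) * r + a, b))"

definition select_rows :: "nat set \<Rightarrow> 'a mat \<Rightarrow> 'a mat" where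
  "select_rows B A = mat (card B) (dim_col A)
     (\<lambda>(a, b). A $$ (sorted_list_of_set B ! a - 1, b))"

definition coded_data ::
  "(nat \<Rightarrow> 'a::field) \<Rightarrow> nat \<Rightarrow> nat \<Rightarrow> nat \<Rightarrow> (nat \<Rightarrow> nat) \<Rightarrow>
   (nat \<Rightarrow> nat \<Rightarrow> 'a mat) \<Rightarrow> (nat \<Rightarrow> nat \<Rightarrow> nat \<Rightarrow> 'a mat) \<Rightarrow> nat \<Rightarrow> nat \<Rightarrow> 'a \<Rightarrow> 'a mat" where
  "coded_data \<beta> K T Mdim d X Z n i x =
     mat (Mdim div K) (d n) (\<lambda>(a, b).
        (\<Sum>k\<in>{1..K}. lagrange_basis \<beta> (K + T) k x * row_block (Mdim div K) k (X n i) $$ (a, b))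
      + (\<Sum>k\<in>{K+1..K+T}. lagrange_basis \<beta> (K + T) k x * Z n i k $$ (a, b)))"

definition coded_model ::
  "(nat \<Rightarrow> 'a::field) \<Rightarrow> nat \<Rightarrow> nat \<Rightarrow> nat \<Rightarrow> (nat \<Rightarrow> nat) \<Rightarrow>
   (nat \<Rightarrow> nat \<Rightarrow> 'a mat) \<Rightarrow> (nat \<Rightarrow> nat \<Rightarrow> nat \<Rightarrow> 'a mat) \<Rightarrow> nat \<Rightarrow> nat \<Rightarrow> 'a \<Rightarrow> 'a mat" where
  "coded_model \<beta> K T h d W V n i x =
     mat (d n) h (\<lambda>(a, b).
        (\<Sum>k\<in>{1..K}. lagrange_basis \<beta> (K + T) k x * W n i $$ (a, b))
      + (\<Sum>k\<in>{K+1..K+T}. lagrange_basis \<beta> (K + T) k x * V n i k $$ (a, b)))"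

definition uploaded ::
  "(nat \<Rightarrow> 'a::field) \<Rightarrow> (nat \<Rightarrow> 'a) \<Rightarrow> nat \<Rightarrow> nat \<Rightarrow> nat \<Rightarrow> nat \<Rightarrow> nat \<Rightarrow>
   (nat \<Rightarrow> nat) \<Rightarrow> (nat \<Rightarrow> nat) \<Rightarrow> nat set \<Rightarrow>
   (nat \<Rightarrow> nat \<Rightarrow> 'a mat) \<Rightarrow> (nat \<Rightarrow> nat \<Rightarrow> 'a mat) \<Rightarrow>
   (nat \<Rightarrow> nat \<Rightarrow> nat \<Rightarrow> 'a mat) \<Rightarrow> (nat \<Rightarrow> nat \<Rightarrow> nat \<Rightarrow> 'a mat) \<Rightarrow> nat \<Rightarrow> 'a mat" where
  "uploaded \<alpha> \<beta> N K T Mdim h D d B X W Z V n' =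
     mat (card B) h (\<lambda>(a, b). \<Sum>m\<in>{1..N}. \<Sum>i\<in>{1..D m}.
        (select_rows B (coded_data \<beta> K T Mdim d X Z m i (\<alpha> n'))
          * coded_model \<beta> K T h d W V m i (\<alpha> n')) $$ (a, b))"

text \<open>The uniform distribution
  on this (finite) set is exactly: all masks uniform and mutually independent.\<close>
definition mask_set ::
  "nat \<Rightarrow> nat \<Rightarrow> nat \<Rightarrow> nat \<Rightarrow> nat \<Rightarrow> (nat \<Rightarrow> nat) \<Rightarrow> (nat \<Rightarrow> nat) \<Rightarrow>
   ((nat \<Rightarrow> nat \<Rightarrow> nat \<Rightarrow> 'a::zero mat) \<times> (nat \<Rightarrow> nat \<Rightarrow> nat \<Rightarrow> 'a mat)) set" where
  "mask_set N K T Mdim h D d = {(Z, V). \<forall>n i k.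
     (if n \<in> {1..N} \<and> i \<in> {1..D n} \<and> k \<in> {K+1..K+T}
      then Z n i k \<in> carrier_mat (Mdim div K) (d n) \<and> V n i k \<in> carrier_mat (d n) h
      else Z n i k = 0\<^sub>m 0 0 \<and> V n i k = 0\<^sub>m 0 0)}"

end

theory Submission
  imports Defs
begin

(* Client n's upload depends on the masks only through the shares F_m^i(alpha_n), G_m^i(alpha_n),
   in which the mask with index K+1 has the coefficient L_{K+1}(alpha_n).  This coefficient is
   nonzero because alpha_n is none of the interpolation points beta_k.  Hence translating that
   mask by L_{K+1}(alpha_n)^{-1} times the difference of the data (resp. model) terms is a
   bijection of the mask set that turns the upload for the data (X, W) into the upload for any
   other data (X', W').  Under uniformly random masks the upload therefore has the same
   distribution whatever the data, so it is independent of the data and their mutual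
   information vanishes. *)

lemma mutual_information_pmf_eq_0:
  fixes P :: "'w pmf" and X :: "'w \<Rightarrow> 'x" and Y :: "'w \<Rightarrow> 'y"
  assumes indep: "map_pmf (\<lambda>\<omega>. (X \<omega>, Y \<omega>)) P = pair_pmf (map_pmf X P) (map_pmf Y P)"
  shows "prob_space.mutual_information (measure_pmf P) b
           (count_space UNIV) (count_space UNIV) X Y = 0"
proof -
  let ?M = "measure_pmf P" and ?S = "count_space UNIV :: 'x measure"
    and ?T = "count_space UNIV :: 'y measure"
  let ?joint = "distr ?M (?S \<Otimes>\<^sub>M ?T) (\<lambda>\<omega>. (X \<omega>, Y \<omega>))"
  have distr_X: "distr ?M ?S X = measure_pmf (map_pmf X P)"
    and distr_Y: "distr ?M ?T Y = measure_pmf (map_pmf Y P)"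
    by (simp_all add: map_pmf_rep_eq)
  have sets_prod:
    "sets (measure_pmf (map_pmf X P) \<Otimes>\<^sub>M measure_pmf (map_pmf Y P)) = sets (?S \<Otimes>\<^sub>M ?T)"
    by (rule sets_pair_measure_cong) auto
  have product_eq_joint: "distr ?M ?S X \<Otimes>\<^sub>M distr ?M ?T Y = ?joint"
    unfolding distr_X distr_Y
  proof (rule measure_eqI)
    fix A assume "A \<in> sets (measure_pmf (map_pmf X P) \<Otimes>\<^sub>M measure_pmf (map_pmf Y P))"
    then have A: "A \<in> sets (?S \<Otimes>\<^sub>M ?T)" using sets_prod by simp
    have "emeasure (measure_pmf (map_pmf X P) \<Otimes>\<^sub>M measure_pmf (map_pmf Y P)) A
        = (\<integral>\<^sup>+ z. indicator A z \<partial>pair_pmf (map_pmf X P) (map_pmf Y P))"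
      using A sets_prod by (simp add: measure_pmf.emeasure_pair_measure nn_integral_pair_pmf')
    also have "\<dots> = emeasure ?joint A"
      using A by (simp add: indep[symmetric] map_pmf_rep_eq emeasure_distr space_pair_measure)
    finally show "emeasure (measure_pmf (map_pmf X P) \<Otimes>\<^sub>M measure_pmf (map_pmf Y P)) A
        = emeasure ?joint A" .
  qed (simp add: sets_prod)
  interpret joint: prob_space ?joint
    by (rule prob_space.prob_space_distr) (auto simp: prob_space_measure_pmf space_pair_measure)
  show ?thesis
    unfolding prob_space.mutual_information_def[OF prob_space_measure_pmf] product_eq_joint
    by (rule joint.KL_same_eq_0)
qed

lemma map_pmf_pair_pmf_indep:
  fixes F :: "'x \<Rightarrow> 'u \<Rightarrow> 'h" and G :: "'x \<Rightarrow> 'y"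
  assumes same_distr: "\<And>x x'. map_pmf (F x) U = map_pmf (F x') U"
  shows "map_pmf (\<lambda>(x, u). (F x u, G x)) (pair_pmf \<mu> U)
       = pair_pmf (map_pmf (\<lambda>(x, u). F x u) (pair_pmf \<mu> U)) (map_pmf (\<lambda>(x, u). G x) (pair_pmf \<mu> U))"
proof -
  have pair_bind: "map_pmf (\<lambda>(x, u). f x u) (pair_pmf \<mu> U) = bind_pmf \<mu> (\<lambda>x. map_pmf (f x) U)"
    for f :: "'x \<Rightarrow> 'u \<Rightarrow> 'z"
    by (simp add: pair_pmf_def map_bind_pmf map_pmf_def[symmetric] pmf.map_comp comp_def)
  define \<nu> where "\<nu> = map_pmf (\<lambda>(x, u). F x u) (pair_pmf \<mu> U)"
  have F_distr: "map_pmf (F x) U = \<nu>" for x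
  proof -
    have "bind_pmf \<mu> (\<lambda>x'. map_pmf (F x') U) = bind_pmf \<mu> (\<lambda>_. map_pmf (F x) U)"
      by (intro bind_pmf_cong refl same_distr)
    then show ?thesis by (simp add: \<nu>_def pair_bind bind_pmf_const)
  qed
  have G_distr: "map_pmf (\<lambda>(x, u). G x) (pair_pmf \<mu> U) = map_pmf G \<mu>"
    by (simp add: pair_bind map_pmf_def[symmetric] bind_pmf_const)
  have "map_pmf (\<lambda>(x, u). (F x u, G x)) (pair_pmf \<mu> U)
      = bind_pmf \<mu> (\<lambda>x. map_pmf (\<lambda>v. (v, G x)) (map_pmf (F x) U))"
    by (simp add: pair_bind pmf.map_comp comp_def)
  also have "\<dots> = bind_pmf \<mu> (\<lambda>x. bind_pmf \<nu> (\<lambda>v. return_pmf (v, G x)))"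
    by (simp only: F_distr) (simp add: map_pmf_def)
  also have "\<dots> = bind_pmf \<nu> (\<lambda>v. bind_pmf \<mu> (\<lambda>x. return_pmf (v, G x)))"
    by (rule bind_commute_pmf)
  also have "\<dots> = pair_pmf \<nu> (map_pmf G \<mu>)"
    by (simp add: pair_pmf_def map_pmf_def bind_assoc_pmf bind_return_pmf)
  finally show ?thesis by (simp add: \<nu>_def G_distr)
qed

lemma mutual_information_pair_pmf_eq_0:
  fixes F :: "'x \<Rightarrow> 'u \<Rightarrow> 'h" and G :: "'x \<Rightarrow> 'y"
  assumes "\<And>x x'. map_pmf (F x) U = map_pmf (F x') U"
  shows "prob_space.mutual_information (measure_pmf (pair_pmf \<mu> U)) b
           (count_space UNIV) (count_space UNIV) (\<lambda>(x, u). F x u) (\<lambda>(x, u). G x) = 0"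
  using map_pmf_pair_pmf_indep[OF assms, where G=G and \<mu>=\<mu>]
  by (intro mutual_information_pmf_eq_0) (simp add: case_prod_beta')

lemma map_pmf_of_set_bij_betw_cong:
  assumes "bij_betw \<sigma> S S" and fin: "finite S" and ne: "S \<noteq> {}"
    and "\<And>u. u \<in> S \<Longrightarrow> f (\<sigma> u) = g u"
  shows "map_pmf f (pmf_of_set S) = map_pmf g (pmf_of_set S)"
proof -
  have "map_pmf g (pmf_of_set S) = map_pmf f (map_pmf \<sigma> (pmf_of_set S))"
    using assms by (auto simp: pmf.map_comp set_pmf_of_set[OF ne fin] intro!: map_pmf_cong)
  also have "\<dots> = map_pmf f (pmf_of_set S)"
    using assms by (simp add: map_pmf_of_set_bij_betw)
  finally show ?thesis ..
qed

lemma finite_carrier_mat: "finite (carrier_mat r c :: 'a::finite mat set)"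
proof (rule inj_on_finite)
  let ?entries = "\<lambda>A :: 'a mat. restrict (\<lambda>ij. A $$ ij) ({..<r} \<times> {..<c})"
  show "inj_on ?entries (carrier_mat r c)"
  proof (rule inj_onI)
    fix A B :: "'a mat"
    assume A: "A \<in> carrier_mat r c" and B: "B \<in> carrier_mat r c"
      and same_entries: "?entries A = ?entries B"
    show "A = B"
    proof (rule eq_matI)
      fix i j assume "i < dim_row B" "j < dim_col B"
      then show "A $$ (i, j) = B $$ (i, j)"
        using fun_cong[OF same_entries, of "(i, j)"] B by auto
    qed (use A B in auto)
  qed
  show "?entries ` carrier_mat r c \<subseteq> ({..<r} \<times> {..<c}) \<rightarrow>\<^sub>E UNIV"
    by (intro image_subsetI restrict_PiE) auto
  show "finite (({..<r} \<times> {..<c}) \<rightarrow>\<^sub>E (UNIV :: 'a set))"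
    by (intro finite_PiE) auto
qed

lemma mask_set_carrier:
  assumes "(Z, V) \<in> mask_set N K T Mdim h D d"
    and "m \<in> {1..N}" "i \<in> {1..D m}" "k \<in> {K+1..K+T}"
  shows "Z m i k \<in> carrier_mat (Mdim div K) (d m) \<and> V m i k \<in> carrier_mat (d m) h"
  using assms unfolding mask_set_def by auto

lemma mask_set_outside:
  assumes "(Z, V) \<in> mask_set N K T Mdim h D d"
    and "\<not> (m \<in> {1..N} \<and> i \<in> {1..D m} \<and> k \<in> {K+1..K+T})"
  shows "Z m i k = 0\<^sub>m 0 0 \<and> V m i k = 0\<^sub>m 0 0"
  using assms unfolding mask_set_def by auto

lemma finite_mask_set:
  "finite (mask_set N K T Mdim h D d
     :: ((nat \<Rightarrow> nat \<Rightarrow> nat \<Rightarrow> 'a::{finite, zero} mat) \<times> (nat \<Rightarrow> nat \<Rightarrow> nat \<Rightarrow> 'a mat)) set)"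
proof (rule inj_on_finite)
  let ?S = "mask_set N K T Mdim h D d
     :: ((nat \<Rightarrow> nat \<Rightarrow> nat \<Rightarrow> 'a mat) \<times> (nat \<Rightarrow> nat \<Rightarrow> nat \<Rightarrow> 'a mat)) set"
  let ?I = "SIGMA m:{1..N}. SIGMA i:{1..D m}. {K+1..K+T}"
  let ?C = "\<Union>m\<in>{1..N}. carrier_mat (Mdim div K) (d m) \<union> carrier_mat (d m) h :: 'a mat set"
  let ?restr = "\<lambda>(Z, V). (restrict (\<lambda>(m, i, k). Z m i k) ?I, restrict (\<lambda>(m, i, k). V m i k) ?I)"
  show "inj_on ?restr ?S"
  proof (rule inj_onI)
    fix p p' :: "(nat \<Rightarrow> nat \<Rightarrow> nat \<Rightarrow> 'a mat) \<times> (nat \<Rightarrow> nat \<Rightarrow> nat \<Rightarrow> 'a mat)"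
    assume p: "p \<in> ?S" and p': "p' \<in> ?S"
      and same: "?restr p = ?restr p'"
    obtain Z V Z' V' where pairs: "p = (Z, V)" "p' = (Z', V')"
      by fastforce
    have same_entries: "Z m i k = Z' m i k \<and> V m i k = V' m i k" for m i k
      using same mask_set_outside[OF p[unfolded pairs]] mask_set_outside[OF p'[unfolded pairs]]
      unfolding pairs by (cases "(m, i, k) \<in> ?I") (auto dest!: fun_cong[where x="(m, i, k)"])
    show "p = p'"
      unfolding pairs using same_entries by (simp add: fun_eq_iff)
  qed
  show "?restr ` ?S \<subseteq> (?I \<rightarrow>\<^sub>E ?C) \<times> (?I \<rightarrow>\<^sub>E ?C)"
  proof (rule image_subsetI)
    fix p assume p: "p \<in> ?S"
    obtain Z V where pair: "p = (Z, V)"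
      by fastforce
    have "(\<lambda>(m, i, k). Z m i k) \<in> ?I \<rightarrow> ?C" "(\<lambda>(m, i, k). V m i k) \<in> ?I \<rightarrow> ?C"
      using mask_set_carrier[OF p[unfolded pair]] by auto
    then show "?restr p \<in> (?I \<rightarrow>\<^sub>E ?C) \<times> (?I \<rightarrow>\<^sub>E ?C)"
      by (simp add: pair)
  qed
  show "finite ((?I \<rightarrow>\<^sub>E ?C) \<times> (?I \<rightarrow>\<^sub>E ?C))"
    by (intro finite_cartesian_product finite_PiE finite_SigmaI finite_UN_I finite_UnI
        finite_carrier_mat) auto
qed

lemma mask_set_nonempty: "mask_set N K T Mdim h D d \<noteq> {}"
proof -
  have "(\<lambda>m i k. if m \<in> {1..N} \<and> i \<in> {1..D m} \<and> k \<in> {K+1..K+T} then 0\<^sub>m (Mdim div K) (d m) else 0\<^sub>m 0 0,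
         \<lambda>m i k. if m \<in> {1..N} \<and> i \<in> {1..D m} \<and> k \<in> {K+1..K+T} then 0\<^sub>m (d m) h else 0\<^sub>m 0 0)
        \<in> mask_set N K T Mdim h D d"
    unfolding mask_set_def by auto
  then show ?thesis by blast
qed

definition translate_masks ::
  "nat \<Rightarrow> (nat \<Rightarrow> nat) \<Rightarrow> nat \<Rightarrow> (nat \<Rightarrow> nat \<Rightarrow> 'a::plus mat) \<Rightarrow>
   (nat \<Rightarrow> nat \<Rightarrow> nat \<Rightarrow> 'a mat) \<Rightarrow> nat \<Rightarrow> nat \<Rightarrow> nat \<Rightarrow> 'a mat" where
  "translate_masks N D k0 \<Delta> Z = (\<lambda>m i.
     if m \<in> {1..N} \<and> i \<in> {1..D m} then (Z m i)(k0 := Z m i k0 + \<Delta> m i) else Z m i)"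

lemma translate_masks_in_mask_set:
  assumes "k0 \<in> {K+1..K+T}" and "(Z, V) \<in> mask_set N K T Mdim h D d"
    and "\<And>m i. m \<in> {1..N} \<Longrightarrow> i \<in> {1..D m} \<Longrightarrow>
           \<Delta>Z m i \<in> carrier_mat (Mdim div K) (d m) \<and> \<Delta>V m i \<in> carrier_mat (d m) h"
  shows "(translate_masks N D k0 \<Delta>Z Z, translate_masks N D k0 \<Delta>V V) \<in> mask_set N K T Mdim h D d"
  using assms unfolding mask_set_def translate_masks_def by (auto split: if_splits)

lemma add_uminus_cancel_mat:
  "A \<in> carrier_mat r c \<Longrightarrow> B \<in> carrier_mat r c \<Longrightarrow> A + B + - B = (A :: 'a::group_add mat)"
  by (intro eq_matI) (auto simp: add.assoc)

lemma translate_masks_cancel: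
  fixes \<Delta>Z \<Delta>V :: "nat \<Rightarrow> nat \<Rightarrow> 'a::group_add mat"
  assumes k0: "k0 \<in> {K+1..K+T}" and ZV: "(Z, V) \<in> mask_set N K T Mdim h D d"
    and \<Delta>: "\<And>m i. m \<in> {1..N} \<Longrightarrow> i \<in> {1..D m} \<Longrightarrow>
           \<Delta>Z m i \<in> carrier_mat (Mdim div K) (d m) \<and> \<Delta>V m i \<in> carrier_mat (d m) h"
  shows "translate_masks N D k0 (\<lambda>m i. - \<Delta>Z m i) (translate_masks N D k0 \<Delta>Z Z) = Z"
    and "translate_masks N D k0 (\<lambda>m i. - \<Delta>V m i) (translate_masks N D k0 \<Delta>V V) = V"
proof -
  have "Z m i k0 + \<Delta>Z m i + - \<Delta>Z m i = Z m i k0 \<and> V m i k0 + \<Delta>V m i + - \<Delta>V m i = V m i k0"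
    if "m \<in> {1..N}" "i \<in> {1..D m}" for m i
    using mask_set_carrier[OF ZV that k0] \<Delta>[OF that] by (metis add_uminus_cancel_mat)
  then show "translate_masks N D k0 (\<lambda>m i. - \<Delta>Z m i) (translate_masks N D k0 \<Delta>Z Z) = Z"
    and "translate_masks N D k0 (\<lambda>m i. - \<Delta>V m i) (translate_masks N D k0 \<Delta>V V) = V"
    by (auto simp: translate_masks_def fun_eq_iff)
qed

lemma bij_betw_translate_masks:
  fixes \<Delta>Z \<Delta>V :: "nat \<Rightarrow> nat \<Rightarrow> 'a::group_add mat"
  assumes k0: "k0 \<in> {K+1..K+T}"
    and \<Delta>: "\<And>m i. m \<in> {1..N} \<Longrightarrow> i \<in> {1..D m} \<Longrightarrow>
           \<Delta>Z m i \<in> carrier_mat (Mdim div K) (d m) \<and> \<Delta>V m i \<in> carrier_mat (d m) h"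
  shows "bij_betw (\<lambda>(Z, V). (translate_masks N D k0 \<Delta>Z Z, translate_masks N D k0 \<Delta>V V))
           (mask_set N K T Mdim h D d) (mask_set N K T Mdim h D d)"
proof -
  let ?S = "mask_set N K T Mdim h D d"
  let ?\<tau> = "\<lambda>\<Delta>Z' \<Delta>V' (Z, V). (translate_masks N D k0 \<Delta>Z' Z, translate_masks N D k0 \<Delta>V' V)"
  let ?\<tau>_inv = "?\<tau> (\<lambda>m i. - \<Delta>Z m i) (\<lambda>m i. - \<Delta>V m i)"
  have neg_\<Delta>: "- \<Delta>Z m i \<in> carrier_mat (Mdim div K) (d m) \<and> - \<Delta>V m i \<in> carrier_mat (d m) h"
    if "m \<in> {1..N}" "i \<in> {1..D m}" for m i
    using \<Delta>[OF that] by auto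
  have "bij_betw (?\<tau> \<Delta>Z \<Delta>V) ?S ?S"
  proof (rule bij_betw_byWitness[where f' = ?\<tau>_inv])
    show "\<forall>p\<in>?S. ?\<tau>_inv (?\<tau> \<Delta>Z \<Delta>V p) = p"
      using translate_masks_cancel[OF k0 _ \<Delta>] by auto
    show "\<forall>p\<in>?S. ?\<tau> \<Delta>Z \<Delta>V (?\<tau>_inv p) = p"
      using translate_masks_cancel[OF k0 _ neg_\<Delta>] by auto
    show "?\<tau> \<Delta>Z \<Delta>V ` ?S \<subseteq> ?S"
      using translate_masks_in_mask_set[OF k0 _ \<Delta>] by auto
    show "?\<tau>_inv ` ?S \<subseteq> ?S"
      using translate_masks_in_mask_set[OF k0 _ neg_\<Delta>] by auto
  qed
  then show ?thesis
    by simp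
qed

definition data_term ::
  "(nat \<Rightarrow> 'a::field) \<Rightarrow> nat \<Rightarrow> nat \<Rightarrow> nat \<Rightarrow> (nat \<Rightarrow> nat) \<Rightarrow>
   (nat \<Rightarrow> nat \<Rightarrow> 'a mat) \<Rightarrow> nat \<Rightarrow> nat \<Rightarrow> 'a \<Rightarrow> 'a mat" where
  "data_term \<beta> K T Mdim d X m i x = mat (Mdim div K) (d m) (\<lambda>(a, b).
     \<Sum>k\<in>{1..K}. lagrange_basis \<beta> (K + T) k x * row_block (Mdim div K) k (X m i) $$ (a, b))"

definition model_term ::
  "(nat \<Rightarrow> 'a::field) \<Rightarrow> nat \<Rightarrow> nat \<Rightarrow> nat \<Rightarrow> (nat \<Rightarrow> nat) \<Rightarrow>
   (nat \<Rightarrow> nat \<Rightarrow> 'a mat) \<Rightarrow> nat \<Rightarrow> nat \<Rightarrow> 'a \<Rightarrow> 'a mat" where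
  "model_term \<beta> K T h d W m i x = mat (d m) h (\<lambda>(a, b).
     \<Sum>k\<in>{1..K}. lagrange_basis \<beta> (K + T) k x * W m i $$ (a, b))"

definition mask_term ::
  "(nat \<Rightarrow> 'a::field) \<Rightarrow> nat \<Rightarrow> nat \<Rightarrow> nat \<Rightarrow> nat \<Rightarrow> (nat \<Rightarrow> 'a mat) \<Rightarrow> 'a \<Rightarrow> 'a mat" where
  "mask_term \<beta> K T r c Y x = mat r c (\<lambda>(a, b).
     \<Sum>k\<in>{K+1..K+T}. lagrange_basis \<beta> (K + T) k x * Y k $$ (a, b))"

lemma coded_data_eq_data_term_add_mask_term:
  "coded_data \<beta> K T Mdim d X Z m i x
     = data_term \<beta> K T Mdim d X m i x + mask_term \<beta> K T (Mdim div K) (d m) (Z m i) x"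
  unfolding coded_data_def data_term_def mask_term_def by (intro eq_matI) auto

lemma coded_model_eq_model_term_add_mask_term:
  "coded_model \<beta> K T h d W V m i x
     = model_term \<beta> K T h d W m i x + mask_term \<beta> K T (d m) h (V m i) x"
  unfolding coded_model_def model_term_def mask_term_def by (intro eq_matI) auto

lemma mask_term_translate:
  assumes k0: "k0 \<in> {K+1..K+T}" and \<Delta>: "\<Delta> \<in> carrier_mat r c"
  shows "mask_term \<beta> K T r c (Y(k0 := Y k0 + \<Delta>)) x
       = mask_term \<beta> K T r c Y x + lagrange_basis \<beta> (K + T) k0 x \<cdot>\<^sub>m \<Delta>"
proof (rule eq_matI)
  fix a b assume "a < dim_row (mask_term \<beta> K T r c Y x + lagrange_basis \<beta> (K + T) k0 x \<cdot>\<^sub>m \<Delta>)"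
    and "b < dim_col (mask_term \<beta> K T r c Y x + lagrange_basis \<beta> (K + T) k0 x \<cdot>\<^sub>m \<Delta>)"
  then have ab: "a < r" "b < c" using \<Delta> by auto
  let ?L = "\<lambda>k. lagrange_basis \<beta> (K + T) k x"
  have "(\<Sum>k\<in>{K+1..K+T}. ?L k * (Y(k0 := Y k0 + \<Delta>)) k $$ (a, b))
      = ?L k0 * (Y k0 + \<Delta>) $$ (a, b) + (\<Sum>k\<in>{K+1..K+T} - {k0}. ?L k * Y k $$ (a, b))"
    using k0 by (simp add: sum.remove)
  also have "\<dots> = (\<Sum>k\<in>{K+1..K+T}. ?L k * Y k $$ (a, b)) + ?L k0 * \<Delta> $$ (a, b)"
    using k0 ab \<Delta> by (simp add: sum.remove distrib_left)
  finally show "mask_term \<beta> K T r c (Y(k0 := Y k0 + \<Delta>)) x $$ (a, b)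
      = (mask_term \<beta> K T r c Y x + ?L k0 \<cdot>\<^sub>m \<Delta>) $$ (a, b)"
    using ab \<Delta> by (simp add: mask_term_def)
qed (use \<Delta> in \<open>auto simp: mask_term_def\<close>)

lemma add_offset_smult_mat:
  fixes c :: "'a::field"
  assumes "c \<noteq> 0" "A \<in> carrier_mat r s" "A' \<in> carrier_mat r s" "M \<in> carrier_mat r s"
  shows "A + (M + c \<cdot>\<^sub>m (inverse c \<cdot>\<^sub>m (A' - A))) = A' + M"
  using assms by (intro eq_matI) (auto simp: field_simps)

lemma coded_data_translate_masks:
  assumes L: "lagrange_basis \<beta> (K + T) k0 x \<noteq> 0" and k0: "k0 \<in> {K+1..K+T}"
    and mi: "m \<in> {1..N}" "i \<in> {1..D m}"
  shows "coded_data \<beta> K T Mdim d X (translate_masks N D k0 (\<lambda>m i.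
             inverse (lagrange_basis \<beta> (K + T) k0 x) \<cdot>\<^sub>m
               (data_term \<beta> K T Mdim d X' m i x - data_term \<beta> K T Mdim d X m i x)) Z) m i x
       = coded_data \<beta> K T Mdim d X' Z m i x"
proof -
  let ?r = "Mdim div K" and ?c = "lagrange_basis \<beta> (K + T) k0 x"
  let ?P = "data_term \<beta> K T Mdim d X m i x" and ?P' = "data_term \<beta> K T Mdim d X' m i x"
  have P: "?P \<in> carrier_mat ?r (d m)" and P': "?P' \<in> carrier_mat ?r (d m)"
    and M: "mask_term \<beta> K T ?r (d m) (Z m i) x \<in> carrier_mat ?r (d m)"
    by (simp_all add: data_term_def mask_term_def)
  then have \<Delta>: "inverse ?c \<cdot>\<^sub>m (?P' - ?P) \<in> carrier_mat ?r (d m)"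
    by (simp add: minus_carrier_mat)
  show ?thesis
    using mi unfolding coded_data_eq_data_term_add_mask_term
    by (simp add: translate_masks_def mask_term_translate[OF k0 \<Delta>] add_offset_smult_mat[OF L P P' M])
qed

lemma coded_model_translate_masks:
  assumes L: "lagrange_basis \<beta> (K + T) k0 x \<noteq> 0" and k0: "k0 \<in> {K+1..K+T}"
    and mi: "m \<in> {1..N}" "i \<in> {1..D m}"
  shows "coded_model \<beta> K T h d W (translate_masks N D k0 (\<lambda>m i.
             inverse (lagrange_basis \<beta> (K + T) k0 x) \<cdot>\<^sub>m
               (model_term \<beta> K T h d W' m i x - model_term \<beta> K T h d W m i x)) V) m i x
       = coded_model \<beta> K T h d W' V m i x"
proof -
  let ?c = "lagrange_basis \<beta> (K + T) k0 x"
  let ?P = "model_term \<beta> K T h d W m i x" and ?P' = "model_term \<beta> K T h d W' m i x"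
  have P: "?P \<in> carrier_mat (d m) h" and P': "?P' \<in> carrier_mat (d m) h"
    and M: "mask_term \<beta> K T (d m) h (V m i) x \<in> carrier_mat (d m) h"
    by (simp_all add: model_term_def mask_term_def)
  then have \<Delta>: "inverse ?c \<cdot>\<^sub>m (?P' - ?P) \<in> carrier_mat (d m) h"
    by (simp add: minus_carrier_mat)
  show ?thesis
    using mi unfolding coded_model_eq_model_term_add_mask_term
    by (simp add: translate_masks_def mask_term_translate[OF k0 \<Delta>] add_offset_smult_mat[OF L P P' M])
qed

lemma lagrange_basis_nonzero:
  assumes "inj_on \<beta> {1..KT}" "k \<in> {1..KT}" "x \<notin> \<beta> ` ({1..KT} - {k})"
  shows "lagrange_basis \<beta> KT k x \<noteq> 0"
  using assms unfolding lagrange_basis_def by (auto dest: inj_onD)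

lemma uploaded_translate_masks:
  assumes L: "lagrange_basis \<beta> (K + T) k0 (\<alpha> n) \<noteq> 0" and k0: "k0 \<in> {K+1..K+T}"
  obtains \<sigma> where "bij_betw \<sigma> (mask_set N K T Mdim h D d) (mask_set N K T Mdim h D d)"
    and "\<And>ZV. (\<lambda>(Z, V). uploaded \<alpha> \<beta> N K T Mdim h D d B X W Z V n) (\<sigma> ZV)
             = (\<lambda>(Z, V). uploaded \<alpha> \<beta> N K T Mdim h D d B X' W' Z V n) ZV"
proof -
  let ?c = "lagrange_basis \<beta> (K + T) k0 (\<alpha> n)"
  define \<Delta>Z where "\<Delta>Z m i = inverse ?c \<cdot>\<^sub>m
    (data_term \<beta> K T Mdim d X' m i (\<alpha> n) - data_term \<beta> K T Mdim d X m i (\<alpha> n))" for m i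
  define \<Delta>V where "\<Delta>V m i = inverse ?c \<cdot>\<^sub>m
    (model_term \<beta> K T h d W' m i (\<alpha> n) - model_term \<beta> K T h d W m i (\<alpha> n))" for m i
  have \<Delta>: "\<Delta>Z m i \<in> carrier_mat (Mdim div K) (d m) \<and> \<Delta>V m i \<in> carrier_mat (d m) h" for m i
    by (simp add: \<Delta>Z_def \<Delta>V_def data_term_def model_term_def minus_carrier_mat)
  have bij: "bij_betw (\<lambda>(Z, V). (translate_masks N D k0 \<Delta>Z Z, translate_masks N D k0 \<Delta>V V))
      (mask_set N K T Mdim h D d) (mask_set N K T Mdim h D d)"
    by (rule bij_betw_translate_masks[OF k0, where \<Delta>Z = \<Delta>Z and \<Delta>V = \<Delta>V]) (simp add: \<Delta>)
  have upl: "uploaded \<alpha> \<beta> N K T Mdim h D d B X W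
        (translate_masks N D k0 \<Delta>Z Z) (translate_masks N D k0 \<Delta>V V) n
      = uploaded \<alpha> \<beta> N K T Mdim h D d B X' W' Z V n" for Z V
    unfolding uploaded_def \<Delta>Z_def \<Delta>V_def
    by (rule cong_mat, simp, simp, simp, intro sum.cong refl)
      (simp add: coded_data_translate_masks[OF L k0] coded_model_translate_masks[OF L k0])
  show thesis
    by (rule that[OF bij]) (simp add: upl split_def)
qed

theorem theorem3:
  fixes \<alpha> \<beta> :: "nat \<Rightarrow> 'a::{finite, field}"
    and N K T Mdim h :: nat
    and D d :: "nat \<Rightarrow> nat"
    and B :: "nat set"
    and \<mu> :: "((nat \<Rightarrow> nat \<Rightarrow> 'a mat) \<times> (nat \<Rightarrow> nat \<Rightarrow> 'a mat)) pmf"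
    and n :: nat
  assumes "prime CARD('a)"
    and "N \<ge> 1" "K \<ge> 1" "T \<ge> 1" "Mdim \<ge> 1" "h \<ge> 1"
    and "K dvd Mdim"
    and "inj_on \<beta> {1..K+T}"
    and "inj_on \<alpha> {1..N}"
    and "\<alpha> ` {1..N} \<inter> \<beta> ` {1..K+T} = {}"
    and "\<forall>m\<in>{1..N}. D m \<ge> 1 \<and> d m \<ge> 1"
    and "\<forall>(X, W) \<in> set_pmf \<mu>. \<forall>m\<in>{1..N}. \<forall>i\<in>{1..D m}.
           X m i \<in> carrier_mat Mdim (d m) \<and> W m i \<in> carrier_mat (d m) h"
    and "B \<subseteq> {1..Mdim div K}"
    and "n \<in> {1..N}"
  shows "prob_space.mutual_information (measure_pmf
           (pair_pmf \<mu> (pmf_of_set (mask_set N K T Mdim h D d)))) 2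
           (count_space UNIV) (count_space UNIV)
           (\<lambda>((X, W), (Z, V)). uploaded \<alpha> \<beta> N K T Mdim h D d B X W Z V n)
           (\<lambda>((X, W), (Z, V)). (map (X n) [1..<D n + 1], map (W n) [1..<D n + 1]))
         = 0"
proof -
  let ?S = "mask_set N K T Mdim h D d
    :: ((nat \<Rightarrow> nat \<Rightarrow> nat \<Rightarrow> 'a mat) \<times> (nat \<Rightarrow> nat \<Rightarrow> nat \<Rightarrow> 'a mat)) set"
  define F :: "(nat \<Rightarrow> nat \<Rightarrow> 'a mat) \<times> (nat \<Rightarrow> nat \<Rightarrow> 'a mat) \<Rightarrow> _"
    where "F = (\<lambda>(X, W) (Z, V). uploaded \<alpha> \<beta> N K T Mdim h D d B X W Z V n)"
  define G :: "(nat \<Rightarrow> nat \<Rightarrow> 'a mat) \<times> (nat \<Rightarrow> nat \<Rightarrow> 'a mat) \<Rightarrow> _"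
    where "G = (\<lambda>(X, W). (map (X n) [1..<D n + 1], map (W n) [1..<D n + 1]))"
  have k0: "K + 1 \<in> {K+1..K+T}"
    using \<open>T \<ge> 1\<close> by simp
  have "\<alpha> n \<notin> \<beta> ` {1..K+T}"
    using \<open>\<alpha> ` {1..N} \<inter> \<beta> ` {1..K+T} = {}\<close> \<open>n \<in> {1..N}\<close> by blast
  then have L: "lagrange_basis \<beta> (K + T) (K + 1) (\<alpha> n) \<noteq> 0"
    using \<open>inj_on \<beta> {1..K+T}\<close> k0 by (intro lagrange_basis_nonzero) auto
  have "map_pmf (F xw) (pmf_of_set ?S) = map_pmf (F xw') (pmf_of_set ?S)" for xw xw'
  proof -
    obtain X W X' W' where xw: "xw = (X, W)" "xw' = (X', W')"
      by fastforce
    obtain \<sigma> where bij: "bij_betw \<sigma> ?S ?S"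
      and "\<And>ZV. (\<lambda>(Z, V). uploaded \<alpha> \<beta> N K T Mdim h D d B X W Z V n) (\<sigma> ZV)
             = (\<lambda>(Z, V). uploaded \<alpha> \<beta> N K T Mdim h D d B X' W' Z V n) ZV"
      using uploaded_translate_masks[where \<alpha> = \<alpha> and n = n, OF L k0] by blast
    then show ?thesis
      by (intro map_pmf_of_set_bij_betw_cong[OF bij finite_mask_set mask_set_nonempty])
        (simp add: F_def xw)
  qed
  then have "prob_space.mutual_information (measure_pmf (pair_pmf \<mu> (pmf_of_set ?S))) 2
      (count_space UNIV) (count_space UNIV) (\<lambda>(xw, ZV). F xw ZV) (\<lambda>(xw, ZV). G xw) = 0"
    by (rule mutual_information_pair_pmf_eq_0)
  then show ?thesis
    by (simp add: F_def G_def split_def)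
qed

end
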